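(* Let $1\to A\to E\xrightarrow{\pi} G\to 1$ be an extension of groups. Let $SQ$ denote either the construction $H\mapsto(\operatorname{Conj}_n(H),\mathrm{inv})$ for a fixed $n\ge 1$, or the construction $H\mapsto(\operatorname{Core}(H),\mathrm{id})$ (the same construction for all groups involved). Then there exists a dynamical cocycle $(\alpha,\beta)$ of the symmetric quandle $SQ(G)$ over the family of sets $S=\{S_x\}_{x\in G}$ with $S_x=A$ (the underlying set of $A$, i.e. of $SQ(A)$) for every $x$, such that $SQ(E)$ is isomorphic as a symmetric quandle to $SQ(G)\times_{(\alpha,\beta)}SQ(A)$.
   Context: For a group $H$ and $n\ge1$, the $n$-conjugation quandle $\operatorname{Conj}_n(H)$ is the set $H$ with $x*y=y^{-n}xy^{n}$, and $\mathrm{inv}(x)=x^{-1}$ is a good involution on it. The core quandle $\operatorname{Core}(H)$ is the set $H$ with $x*y=yx^{-1}y$, and $\mathrm{id}$ is a good involution on it. Here a quandle is a set with binary operation $*$ such that each $x\mapsto x*y$ is bijective (inverse $x\mapsto x*^{-1}y$), $(x*y)*z=(x*z)*(y*z)$ and $x*x=x$; a good involution is $\rho$ with $\rho^2=\mathrm{id}$, $\rho(x*y)=\rho(x)*y$, $x*\rho(y)=x*^{-1}y$, and $(X,\rho)$ is then a symmetric quandle; symmetric quandle homomorphisms preserve $*$ and commute with the involutions. A dynamical cocycle of a symmetric quandle $(X,\rho)$ over a family of sets $S=\{S_x\}$ consists of maps $\alpha_{x,y}:S_x\times S_y\to S_{x*y}$, $\beta_x:S_x\to S_{\rho(x)}$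 such that for all $x,y,z$, $s\in S_x,t\in S_y,w\in S_z$ (with $\alpha_{x,y}(t)(s):=\alpha_{x,y}(s,t)$): (1) $\alpha_{x,y}(t)$ is bijective $S_x\to S_{x*y}$; (2) $\alpha_{x*y,z}(\alpha_{x,y}(s,t),w)=\alpha_{x*z,y*z}(\alpha_{x,z}(s,w),\alpha_{y,z}(t,w))$; (3) $\alpha_{\rho(x),y}(\beta_x(s),t)=\beta_{x*y}(\alpha_{x,y}(s,t))$; (4) $\beta_{\rho(x)}\beta_x(s)=s$; (5) $\alpha_{x,\rho(y)}(\beta_y(t))(s)=(\alpha_{x*^{-1}y,y}(t))^{-1}(s)$; (6) $\alpha_{x,x}(s,s)=s$. The extension $X\times_{(\alpha,\beta)}S$ is the set $\{(x,s)\mid x\in X,s\in S_x\}$ with $(x,s)*(y,t)=(x*y,\alpha_{x,y}(s,t))$ and involution $(x,s)\mapsto(\rho(x),\beta_x(s))$; it is a symmetric quandle. *)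

theory Defs
  imports "HOL-Algebra.Algebra"
begin

definition quandle :: "'x set \<Rightarrow> ('x \<Rightarrow> 'x \<Rightarrow> 'x) \<Rightarrow> bool" where
  "quandle Q mul \<longleftrightarrow>
     (\<forall>y\<in>Q. bij_betw (\<lambda>x. mul x y) Q Q) \<and>
     (\<forall>x\<in>Q. \<forall>y\<in>Q. \<forall>z\<in>Q. mul (mul x y) z = mul (mul x z) (mul y z)) \<and>
     (\<forall>x\<in>Q. mul x x = x)"

definition qinv :: "'x set \<Rightarrow> ('x \<Rightarrow> 'x \<Rightarrow> 'x) \<Rightarrow> 'x \<Rightarrow> 'x \<Rightarrow> 'x" where
  "qinv Q mul x y = the_inv_into Q (\<lambda>z. mul z y) x"

definition good_involution :: "'x set \<Rightarrow> ('x \<Rightarrow> 'x \<Rightarrow> 'x) \<Rightarrow> ('x \<Rightarrow> 'x) \<Rightarrow> bool" where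
  "good_involution Q mul \<rho> \<longleftrightarrow>
     (\<forall>x\<in>Q. \<rho> x \<in> Q) \<and> (\<forall>x\<in>Q. \<rho> (\<rho> x) = x) \<and>
     (\<forall>x\<in>Q. \<forall>y\<in>Q. \<rho> (mul x y) = mul (\<rho> x) y) \<and>
     (\<forall>x\<in>Q. \<forall>y\<in>Q. mul x (\<rho> y) = qinv Q mul x y)"

definition symmetric_quandle :: "'x set \<Rightarrow> ('x \<Rightarrow> 'x \<Rightarrow> 'x) \<Rightarrow> ('x \<Rightarrow> 'x) \<Rightarrow> bool" where
  "symmetric_quandle Q mul \<rho> \<longleftrightarrow> quandle Q mul \<and> good_involution Q mul \<rho>"

definition sym_quandle_iso ::
  "'x set \<Rightarrow> ('x \<Rightarrow> 'x \<Rightarrow> 'x) \<Rightarrow> ('x \<Rightarrow> 'x) \<Rightarrow>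
   'y set \<Rightarrow> ('y \<Rightarrow> 'y \<Rightarrow> 'y) \<Rightarrow> ('y \<Rightarrow> 'y) \<Rightarrow> ('x \<Rightarrow> 'y) \<Rightarrow> bool" where
  "sym_quandle_iso Q mul \<rho> R mul' \<rho>' f \<longleftrightarrow>
     bij_betw f Q R \<and>
     (\<forall>x\<in>Q. \<forall>y\<in>Q. f (mul x y) = mul' (f x) (f y)) \<and>
     (\<forall>x\<in>Q. f (\<rho> x) = \<rho>' (f x))"

definition dyn_cocycle ::
  "'x set \<Rightarrow> ('x \<Rightarrow> 'x \<Rightarrow> 'x) \<Rightarrow> ('x \<Rightarrow> 'x) \<Rightarrow> ('x \<Rightarrow> 's set) \<Rightarrow>
   ('x \<Rightarrow> 'x \<Rightarrow> 's \<Rightarrow> 's \<Rightarrow> 's) \<Rightarrow> ('x \<Rightarrow> 's \<Rightarrow> 's) \<Rightarrow> bool" where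
  "dyn_cocycle Q mul \<rho> S \<alpha> \<beta> \<longleftrightarrow>
     (\<forall>x\<in>Q. \<forall>y\<in>Q. \<forall>s\<in>S x. \<forall>t\<in>S y. \<alpha> x y s t \<in> S (mul x y)) \<and>
     (\<forall>x\<in>Q. \<forall>s\<in>S x. \<beta> x s \<in> S (\<rho> x)) \<and>
     (\<forall>x\<in>Q. \<forall>y\<in>Q. \<forall>t\<in>S y. bij_betw (\<lambda>s. \<alpha> x y s t) (S x) (S (mul x y))) \<and>
     (\<forall>x\<in>Q. \<forall>y\<in>Q. \<forall>z\<in>Q. \<forall>s\<in>S x. \<forall>t\<in>S y. \<forall>w\<in>S z.
        \<alpha> (mul x y) z (\<alpha> x y s t) w = \<alpha> (mul x z) (mul y z) (\<alpha> x z s w) (\<alpha> y z t w)) \<and>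
     (\<forall>x\<in>Q. \<forall>y\<in>Q. \<forall>s\<in>S x. \<forall>t\<in>S y.
        \<alpha> (\<rho> x) y (\<beta> x s) t = \<beta> (mul x y) (\<alpha> x y s t)) \<and>
     (\<forall>x\<in>Q. \<forall>s\<in>S x. \<beta> (\<rho> x) (\<beta> x s) = s) \<and>
     (\<forall>x\<in>Q. \<forall>y\<in>Q. \<forall>s\<in>S x. \<forall>t\<in>S y.
        \<alpha> x (\<rho> y) s (\<beta> y t) =
        the_inv_into (S (qinv Q mul x y)) (\<lambda>s'. \<alpha> (qinv Q mul x y) y s' t) s) \<and>
     (\<forall>x\<in>Q. \<forall>s\<in>S x. \<alpha> x x s s = s)"

text \<open>Extension Q \<times>_(alpha,beta) S: carrier Sigma Q S, with operation and involution:\<close>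
definition ext_op :: "('x \<Rightarrow> 'x \<Rightarrow> 'x) \<Rightarrow> ('x \<Rightarrow> 'x \<Rightarrow> 's \<Rightarrow> 's \<Rightarrow> 's) \<Rightarrow>
    ('x \<times> 's) \<Rightarrow> ('x \<times> 's) \<Rightarrow> ('x \<times> 's)" where
  "ext_op mul \<alpha> p q = (mul (fst p) (fst q), \<alpha> (fst p) (fst q) (snd p) (snd q))"

definition ext_rho :: "('x \<Rightarrow> 'x) \<Rightarrow> ('x \<Rightarrow> 's \<Rightarrow> 's) \<Rightarrow> ('x \<times> 's) \<Rightarrow> ('x \<times> 's)" where
  "ext_rho \<rho> \<beta> p = (\<rho> (fst p), \<beta> (fst p) (snd p))"

datatype sq_kind = ConjK nat | CoreK

definition sq_kind_ok :: "sq_kind \<Rightarrow> bool" where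
  "sq_kind_ok k = (case k of ConjK n \<Rightarrow> n \<ge> 1 | CoreK \<Rightarrow> True)"

definition sq_op :: "sq_kind \<Rightarrow> ('a, 'm) monoid_scheme \<Rightarrow> 'a \<Rightarrow> 'a \<Rightarrow> 'a" where
  "sq_op k H x y = (case k of
      ConjK n \<Rightarrow> inv\<^bsub>H\<^esub> (y [^]\<^bsub>H\<^esub> n) \<otimes>\<^bsub>H\<^esub> x \<otimes>\<^bsub>H\<^esub> (y [^]\<^bsub>H\<^esub> n)
    | CoreK \<Rightarrow> y \<otimes>\<^bsub>H\<^esub> inv\<^bsub>H\<^esub> x \<otimes>\<^bsub>H\<^esub> y)"

definition sq_rho :: "sq_kind \<Rightarrow> ('a, 'm) monoid_scheme \<Rightarrow> 'a \<Rightarrow> 'a" where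
  "sq_rho k H x = (case k of ConjK n \<Rightarrow> inv\<^bsub>H\<^esub> x | CoreK \<Rightarrow> x)"

definition group_extension ::
  "('a, 'm1) monoid_scheme \<Rightarrow> ('e, 'm2) monoid_scheme \<Rightarrow> ('g, 'm3) monoid_scheme \<Rightarrow>
   ('a \<Rightarrow> 'e) \<Rightarrow> ('e \<Rightarrow> 'g) \<Rightarrow> bool" where
  "group_extension A E G \<iota> \<pi> \<longleftrightarrow>
     group A \<and> group E \<and> group G \<and>
     \<iota> \<in> hom A E \<and> inj_on \<iota> (carrier A) \<and>
     \<pi> \<in> hom E G \<and> \<pi> ` carrier E = carrier G \<and>
     \<iota> ` carrier A = kernel E G \<pi>"

end

theory Submission
  imports Defs
begin

(* Choose a set-theoretic section sigma of pi. Then e |-> (pi e, sigma (pi e)^-1 e) is a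
   bijection from E onto G x A lying over pi, and pi is a homomorphism SQ(E) -> SQ(G).
   Transporting SQ(E) along this bijection makes G x A a symmetric quandle whose first
   projection is a homomorphism onto SQ(G).  Every such fibred symmetric quandle is an
   extension: the second coordinates alpha_{x,y}(s,t) = snd ((x,s) * (y,t)) and
   beta_x(s) = snd (rho (x,s)) form a dynamical cocycle, whose axioms are the quandle and
   good-involution axioms of the total space read in the fibres; bijectivity of
   alpha_{x,y}(-,t) comes from right cancellation in the total space and in the base. *)

lemma quandle_closed:
  assumes "quandle Q m" "x \<in> Q" "y \<in> Q"
  shows "m x y \<in> Q"
  using assms unfolding quandle_def bij_betw_def by blast

lemma quandle_self_distrib:
  assumes "quandle Q m" "x \<in> Q" "y \<in> Q" "z \<in> Q"
  shows "m (m x y) z = m (m x z) (m y z)"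
  using assms unfolding quandle_def by blast

lemma quandle_idem:
  assumes "quandle Q m" "x \<in> Q"
  shows "m x x = x"
  using assms unfolding quandle_def by blast

lemma quandle_right_cancel:
  assumes "quandle Q m" "x \<in> Q" "x' \<in> Q" "y \<in> Q" "m x y = m x' y"
  shows "x = x'"
  using assms unfolding quandle_def bij_betw_def by (meson inj_onD)

lemma qinv_closed_and_cancel:
  assumes "quandle Q m" "x \<in> Q" "y \<in> Q"
  shows "qinv Q m x y \<in> Q" and "m (qinv Q m x y) y = x"
proof -
  have "bij_betw (\<lambda>z. m z y) Q Q" using assms unfolding quandle_def by blast
  then show "qinv Q m x y \<in> Q" "m (qinv Q m x y) y = x"
    using assms(2) unfolding qinv_def bij_betw_def
    by (metis the_inv_into_into f_the_inv_into_f subset_refl)+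
qed

lemma qinv_eqI:
  assumes "quandle Q m" "y \<in> Q" "z \<in> Q" "m z y = x"
  shows "qinv Q m x y = z"
  using assms qinv_closed_and_cancel[of Q m x y] quandle_right_cancel[of Q m z _ y]
    quandle_closed[of Q m z y] by metis

lemma quandle_by_right_inverse:
  assumes closed: "\<And>x y. x \<in> Q \<Longrightarrow> y \<in> Q \<Longrightarrow> m x y \<in> Q"
    and closed': "\<And>x y. x \<in> Q \<Longrightarrow> y \<in> Q \<Longrightarrow> m' x y \<in> Q"
    and m_m': "\<And>x y. x \<in> Q \<Longrightarrow> y \<in> Q \<Longrightarrow> m (m' x y) y = x"
    and m'_m: "\<And>x y. x \<in> Q \<Longrightarrow> y \<in> Q \<Longrightarrow> m' (m x y) y = x"
    and distrib: "\<And>x y z. x \<in> Q \<Longrightarrow> y \<in> Q \<Longrightarrow> z \<in> Q \<Longrightarrow>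
      m (m x y) z = m (m x z) (m y z)"
    and idem: "\<And>x. x \<in> Q \<Longrightarrow> m x x = x"
  shows "quandle Q m \<and> (\<forall>x\<in>Q. \<forall>y\<in>Q. qinv Q m x y = m' x y)"
proof
  have "bij_betw (\<lambda>x. m x y) Q Q" if "y \<in> Q" for y
    by (rule bij_betw_byWitness[where f' = "\<lambda>x. m' x y"])
      (auto simp: that closed closed' m_m' m'_m)
  then show q: "quandle Q m"
    unfolding quandle_def using distrib idem by blast
  show "\<forall>x\<in>Q. \<forall>y\<in>Q. qinv Q m x y = m' x y"
    by (intro ballI qinv_eqI[OF q]) (simp_all add: closed' m_m')
qed

lemma good_involution_closed:
  "good_involution Q m \<rho> \<Longrightarrow> x \<in> Q \<Longrightarrow> \<rho> x \<in> Q"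
  and good_involution_involutive:
  "good_involution Q m \<rho> \<Longrightarrow> x \<in> Q \<Longrightarrow> \<rho> (\<rho> x) = x"
  and good_involution_op_left:
  "good_involution Q m \<rho> \<Longrightarrow> x \<in> Q \<Longrightarrow> y \<in> Q \<Longrightarrow> \<rho> (m x y) = m (\<rho> x) y"
  and good_involution_op_right:
  "good_involution Q m \<rho> \<Longrightarrow> x \<in> Q \<Longrightarrow> y \<in> Q \<Longrightarrow> m x (\<rho> y) = qinv Q m x y"
  unfolding good_involution_def by blast+

lemma quandle_bij_image:
  assumes q: "quandle Q m" and bij: "bij_betw f Q R"
    and f_m: "\<And>x y. x \<in> Q \<Longrightarrow> y \<in> Q \<Longrightarrow> f (m x y) = m' (f x) (f y)"
  shows "quandle R m'"
proof -
  have R: "R = f ` Q"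
    using bij by (simp add: bij_betw_def)
  have "bij_betw (\<lambda>a. m' a (f y)) R R" if y: "y \<in> Q" for y
  proof -
    have "bij_betw (f \<circ> (\<lambda>x. m x y) \<circ> the_inv_into Q f) R R"
      using q y bij bij_betw_the_inv_into unfolding quandle_def
      by (blast intro: bij_betw_trans)
    moreover have "(f \<circ> (\<lambda>x. m x y) \<circ> the_inv_into Q f) a = m' a (f y)" if "a \<in> R" for a
      using that y bij R by (auto simp: f_m bij_betw_def the_inv_into_f_f)
    ultimately show ?thesis by (simp cong: bij_betw_cong)
  qed
  moreover have "m' (m' a b) c = m' (m' a c) (m' b c)" if "a \<in> R" "b \<in> R" "c \<in> R" for a b c
  proof -
    obtain x y z where xyz: "x \<in> Q" "y \<in> Q" "z \<in> Q" and "a = f x" "b = f y" "c = f z"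
      using \<open>a \<in> R\<close> \<open>b \<in> R\<close> \<open>c \<in> R\<close> unfolding R by blast
    then show ?thesis
      by (simp add: f_m[symmetric] quandle_closed[OF q] quandle_self_distrib[OF q xyz])
  qed
  moreover have "m' a a = a" if "a \<in> R" for a
    using that R by (auto simp: f_m[symmetric] quandle_idem[OF q])
  ultimately show "quandle R m'"
    unfolding quandle_def using R by blast
qed

lemma symmetric_quandle_iso_image:
  assumes sq: "symmetric_quandle Q m \<rho>" and iso: "sym_quandle_iso Q m \<rho> R m' \<rho>' f"
  shows "symmetric_quandle R m' \<rho>'"
proof -
  have q: "quandle Q m" and gi: "good_involution Q m \<rho>"
    using sq by (simp_all add: symmetric_quandle_def)
  have bij: "bij_betw f Q R" and R: "R = f ` Q"
    and f_m: "\<And>x y. x \<in> Q \<Longrightarrow> y \<in> Q \<Longrightarrow> f (m x y) = m' (f x) (f y)"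
    and f_\<rho>: "\<And>x. x \<in> Q \<Longrightarrow> f (\<rho> x) = \<rho>' (f x)"
    using iso by (auto simp: sym_quandle_iso_def bij_betw_def)
  have qR: "quandle R m'"
    using quandle_bij_image[where m' = m', OF q bij] f_m by blast
  have qinv_f: "qinv R m' (f x) (f y) = f (qinv Q m x y)" if "x \<in> Q" "y \<in> Q" for x y
    using that R by (intro qinv_eqI[OF qR]) (auto simp: f_m[symmetric] qinv_closed_and_cancel[OF q])
  have "good_involution R m' \<rho>'"
    unfolding good_involution_def
  proof (intro conjI ballI)
    fix a b assume "a \<in> R" "b \<in> R"
    then obtain x y where xy: "x \<in> Q" "y \<in> Q" and ab: "a = f x" "b = f y"
      unfolding R by blast
    have "\<rho> x \<in> Q" "\<rho> y \<in> Q" "m x y \<in> Q"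
      using xy good_involution_closed[OF gi] quandle_closed[OF q] by simp_all
    then show "\<rho>' (m' a b) = m' (\<rho>' a) b" "m' a (\<rho>' b) = qinv R m' a b"
      using xy unfolding ab
      by (simp_all add: f_m[symmetric] f_\<rho>[symmetric] good_involution_op_left[OF gi xy]
          good_involution_op_right[OF gi xy] qinv_f[OF xy])
  next
    fix a assume "a \<in> R"
    then obtain x where x: "x \<in> Q" and "a = f x"
      unfolding R by blast
    then show "\<rho>' a \<in> R" "\<rho>' (\<rho>' a) = a"
      using R good_involution_closed[OF gi x]
      by (simp_all add: f_\<rho>[symmetric] good_involution_involutive[OF gi x])
  qed
  with qR show ?thesis by (simp add: symmetric_quandle_def)
qed

locale fibred_symmetric_quandle =
  fixes Q :: "'x set" and S :: "'x \<Rightarrow> 's set"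
    and m :: "'x \<Rightarrow> 'x \<Rightarrow> 'x" and \<rho>\<^sub>Q :: "'x \<Rightarrow> 'x"
    and mul :: "'x \<times> 's \<Rightarrow> 'x \<times> 's \<Rightarrow> 'x \<times> 's" and \<rho> :: "'x \<times> 's \<Rightarrow> 'x \<times> 's"
  assumes symmetric_quandle: "symmetric_quandle (Sigma Q S) mul \<rho>"
    and base_quandle: "quandle Q m"
    and fst_mul: "\<And>p q. p \<in> Sigma Q S \<Longrightarrow> q \<in> Sigma Q S \<Longrightarrow> fst (mul p q) = m (fst p) (fst q)"
    and fst_rho: "\<And>p. p \<in> Sigma Q S \<Longrightarrow> fst (\<rho> p) = \<rho>\<^sub>Q (fst p)"
begin

definition fibre_op :: "'x \<Rightarrow> 'x \<Rightarrow> 's \<Rightarrow> 's \<Rightarrow> 's" where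
  "fibre_op x y s t = snd (mul (x, s) (y, t))"

definition fibre_rho :: "'x \<Rightarrow> 's \<Rightarrow> 's" where
  "fibre_rho x s = snd (\<rho> (x, s))"

lemma quandle: "quandle (Sigma Q S) mul"
  and good_involution: "good_involution (Sigma Q S) mul \<rho>"
  using symmetric_quandle by (simp_all add: symmetric_quandle_def)

lemma mul_pair:
  assumes "x \<in> Q" "s \<in> S x" "y \<in> Q" "t \<in> S y"
  shows "mul (x, s) (y, t) = (m x y, fibre_op x y s t)"
  using assms fst_mul[of "(x, s)" "(y, t)"] by (simp add: fibre_op_def prod_eq_iff)

lemma fibre_op_closed:
  assumes "x \<in> Q" "s \<in> S x" "y \<in> Q" "t \<in> S y"
  shows "fibre_op x y s t \<in> S (m x y)"
  using assms quandle_closed[OF quandle, of "(x, s)" "(y, t)"] by (simp add: mul_pair)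

lemma rho_pair:
  assumes "x \<in> Q" "s \<in> S x"
  shows "\<rho> (x, s) = (\<rho>\<^sub>Q x, fibre_rho x s)"
  using assms fst_rho[of "(x, s)"] by (simp add: fibre_rho_def prod_eq_iff)

lemma fibre_rho_closed:
  assumes "x \<in> Q" "s \<in> S x"
  shows "fibre_rho x s \<in> S (\<rho>\<^sub>Q x)"
  using assms good_involution_closed[OF good_involution, of "(x, s)"] by (simp add: rho_pair)

lemma fst_qinv:
  assumes "p \<in> Sigma Q S" "q \<in> Sigma Q S"
  shows "fst (qinv (Sigma Q S) mul p q) = qinv Q m (fst p) (fst q)"
proof -
  let ?r = "qinv (Sigma Q S) mul p q"
  have "?r \<in> Sigma Q S" "mul ?r q = p"
    using qinv_closed_and_cancel[OF quandle assms] by simp_all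
  then show ?thesis
    using assms fst_mul[of ?r q] by (intro qinv_eqI[OF base_quandle, symmetric]) auto
qed

lemma qinv_pair:
  assumes "x \<in> Q" "s \<in> S x" "y \<in> Q" "t \<in> S y"
  obtains s' where "qinv (Sigma Q S) mul (x, s) (y, t) = (qinv Q m x y, s')"
    and "s' \<in> S (qinv Q m x y)" and "fibre_op (qinv Q m x y) y s' t = s"
proof
  let ?r = "qinv (Sigma Q S) mul (x, s) (y, t)" and ?c = "qinv Q m x y"
  have r: "?r \<in> Sigma Q S" "mul ?r (y, t) = (x, s)"
    using assms qinv_closed_and_cancel[OF quandle] by simp_all
  have "fst ?r = ?c"
    using assms fst_qinv by simp
  then show r_eq: "?r = (?c, snd ?r)"
    by (simp add: prod_eq_iff)
  show "snd ?r \<in> S ?c"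
    using r(1) by (subst (asm) r_eq) simp
  then have "mul ?r (y, t) = (m ?c y, fibre_op ?c y (snd ?r) t)"
    using assms qinv_closed_and_cancel(1)[OF base_quandle] by (subst r_eq) (simp add: mul_pair)
  with r(2) show "fibre_op ?c y (snd ?r) t = s"
    by simp
qed

lemma bij_betw_fibre_op:
  assumes "x \<in> Q" "y \<in> Q" "t \<in> S y"
  shows "bij_betw (\<lambda>s. fibre_op x y s t) (S x) (S (m x y))"
proof (rule bij_betw_byWitness)
  define r where "r u = qinv (Sigma Q S) mul (m x y, u) (y, t)" for u
  have x_eq: "qinv Q m (m x y) y = x"
    using assms by (intro qinv_eqI[OF base_quandle]) simp_all
  show "\<forall>s\<in>S x. snd (r (fibre_op x y s t)) = s"
  proof
    fix s assume "s \<in> S x"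
    then have "r (fibre_op x y s t) = (x, s)"
      unfolding r_def using assms by (intro qinv_eqI[OF quandle]) (simp_all add: mul_pair)
    then show "snd (r (fibre_op x y s t)) = s" by simp
  qed
  have r: "snd (r u) \<in> S x \<and> fibre_op x y (snd (r u)) t = u" if u: "u \<in> S (m x y)" for u
  proof -
    have "m x y \<in> Q"
      using assms quandle_closed[OF base_quandle] by simp
    then obtain s' where "r u = (x, s')" "s' \<in> S x" "fibre_op x y s' t = u"
      using qinv_pair[OF _ u assms(2,3)] unfolding r_def x_eq by blast
    then show ?thesis by simp
  qed
  then show "\<forall>u\<in>S (m x y). fibre_op x y (snd (r u)) t = u"
    and "(\<lambda>u. snd (r u)) ` S (m x y) \<subseteq> S x"
    by auto
  show "(\<lambda>s. fibre_op x y s t) ` S x \<subseteq> S (m x y)"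
    using assms fibre_op_closed by auto
qed

lemma fibre_op_rho:
  assumes "x \<in> Q" "s \<in> S x" "y \<in> Q" "t \<in> S y"
  shows "fibre_op x (\<rho>\<^sub>Q y) s (fibre_rho y t) =
    the_inv_into (S (qinv Q m x y)) (\<lambda>s'. fibre_op (qinv Q m x y) y s' t) s"
proof -
  obtain s' where r: "qinv (Sigma Q S) mul (x, s) (y, t) = (qinv Q m x y, s')"
    and s': "s' \<in> S (qinv Q m x y)" "fibre_op (qinv Q m x y) y s' t = s"
    using qinv_pair[OF assms] .
  have "qinv Q m x y \<in> Q"
    using assms qinv_closed_and_cancel[OF base_quandle] by simp
  then have inj: "inj_on (\<lambda>s'. fibre_op (qinv Q m x y) y s' t) (S (qinv Q m x y))"
    using bij_betw_fibre_op assms by (simp add: bij_betw_def)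
  have "fibre_op x (\<rho>\<^sub>Q y) s (fibre_rho y t) = snd (mul (x, s) (\<rho> (y, t)))"
    using assms by (simp add: rho_pair fibre_op_def)
  also have "\<dots> = s'"
    using assms r good_involution_op_right[OF good_involution, of "(x, s)" "(y, t)"] by simp
  also have "\<dots> = the_inv_into (S (qinv Q m x y)) (\<lambda>s'. fibre_op (qinv Q m x y) y s' t) s"
    using inj s' by (simp add: the_inv_into_f_eq)
  finally show ?thesis .
qed

lemma dyn_cocycle: "dyn_cocycle Q m \<rho>\<^sub>Q S fibre_op fibre_rho"
  unfolding dyn_cocycle_def
proof (intro conjI ballI fibre_op_closed fibre_rho_closed bij_betw_fibre_op fibre_op_rho)
  fix x y z s t w assume "x \<in> Q" "y \<in> Q" "z \<in> Q" "s \<in> S x" "t \<in> S y" "w \<in> S z"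
  then show "fibre_op (m x y) z (fibre_op x y s t) w =
      fibre_op (m x z) (m y z) (fibre_op x z s w) (fibre_op y z t w)"
    using quandle_self_distrib[OF quandle, of "(x, s)" "(y, t)" "(z, w)"]
    by (simp add: mul_pair fibre_op_closed quandle_closed[OF base_quandle])
next
  fix x y s t assume "x \<in> Q" "y \<in> Q" "s \<in> S x" "t \<in> S y"
  then show "fibre_op (\<rho>\<^sub>Q x) y (fibre_rho x s) t = fibre_rho (m x y) (fibre_op x y s t)"
    using good_involution_op_left[OF good_involution, of "(x, s)" "(y, t)"]
      good_involution_closed[OF good_involution, of "(x, s)"]
    by (simp add: mul_pair rho_pair fibre_op_closed quandle_closed[OF base_quandle])
next
  fix x s assume "x \<in> Q" "s \<in> S x"
  then show "fibre_rho (\<rho>\<^sub>Q x) (fibre_rho x s) = s" and "fibre_op x x s s = s"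
    using good_involution_involutive[OF good_involution, of "(x, s)"]
      good_involution_closed[OF good_involution, of "(x, s)"] quandle_idem[OF quandle, of "(x, s)"]
    by (simp_all add: mul_pair rho_pair fibre_rho_closed)
qed

lemma ext_op_eq: "p \<in> Sigma Q S \<Longrightarrow> q \<in> Sigma Q S \<Longrightarrow> ext_op m fibre_op p q = mul p q"
  by (auto simp: ext_op_def mul_pair)

lemma ext_rho_eq: "p \<in> Sigma Q S \<Longrightarrow> ext_rho \<rho>\<^sub>Q fibre_rho p = \<rho> p"
  by (auto simp: ext_rho_def rho_pair)

end

lemma ex_dyn_cocycle_ext_iso:
  assumes sqE: "symmetric_quandle QE mE \<rho>E" and qQ: "quandle Q m"
    and bij: "bij_betw f QE (Sigma Q S)"
    and fst_mul: "\<And>a b. a \<in> QE \<Longrightarrow> b \<in> QE \<Longrightarrow> fst (f (mE a b)) = m (fst (f a)) (fst (f b))"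
    and fst_\<rho>: "\<And>a. a \<in> QE \<Longrightarrow> fst (f (\<rho>E a)) = \<rho>Q (fst (f a))"
  shows "\<exists>\<alpha> \<beta>. dyn_cocycle Q m \<rho>Q S \<alpha> \<beta> \<and>
    sym_quandle_iso QE mE \<rho>E (Sigma Q S) (ext_op m \<alpha>) (ext_rho \<rho>Q \<beta>) f"
proof -
  define g where "g = the_inv_into QE f"
  define mul where "mul p q = f (mE (g p) (g q))" for p q
  define \<rho> where "\<rho> p = f (\<rho>E (g p))" for p
  have g: "g p \<in> QE" "f (g p) = p" if "p \<in> Sigma Q S" for p
    using that bij unfolding g_def bij_betw_def
    by (metis the_inv_into_into f_the_inv_into_f subset_refl)+
  have g_f: "g (f a) = a" if "a \<in> QE" for a
    using that bij by (simp add: g_def bij_betw_def the_inv_into_f_f)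
  have iso: "sym_quandle_iso QE mE \<rho>E (Sigma Q S) mul \<rho> f"
    using bij by (simp add: sym_quandle_iso_def mul_def \<rho>_def g_f)
  interpret fibred_symmetric_quandle Q S m \<rho>Q mul \<rho>
  proof
    show "symmetric_quandle (Sigma Q S) mul \<rho>"
      using symmetric_quandle_iso_image[OF sqE iso] .
    show "fst (mul p q) = m (fst p) (fst q)" if "p \<in> Sigma Q S" "q \<in> Sigma Q S" for p q
      using that fst_mul[OF g(1) g(1)] by (simp add: mul_def g(2))
    show "fst (\<rho> p) = \<rho>Q (fst p)" if "p \<in> Sigma Q S" for p
      using that fst_\<rho>[OF g(1)] by (simp add: \<rho>_def g(2))
  qed (rule qQ)
  have "sym_quandle_iso QE mE \<rho>E (Sigma Q S) (ext_op m fibre_op) (ext_rho \<rho>Q fibre_rho) f"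
    using iso bij by (simp add: sym_quandle_iso_def bij_betw_apply ext_op_eq ext_rho_eq)
  with dyn_cocycle show ?thesis by blast
qed

context group
begin

lemma inv_m_cancel_left: "a \<in> carrier G \<Longrightarrow> b \<in> carrier G \<Longrightarrow> inv a \<otimes> (a \<otimes> b) = b"
  by (simp add: m_assoc[symmetric])

lemma m_inv_cancel_left: "a \<in> carrier G \<Longrightarrow> b \<in> carrier G \<Longrightarrow> a \<otimes> (inv a \<otimes> b) = b"
  by (simp add: m_assoc[symmetric])

lemma nat_pow_conj:
  "g \<in> carrier G \<Longrightarrow> x \<in> carrier G \<Longrightarrow> (inv g \<otimes> x \<otimes> g) [^] (n::nat) = inv g \<otimes> x [^] n \<otimes> g"
  by (induction n) (simp_all add: m_assoc m_inv_cancel_left)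

lemma symmetric_quandle_Conj:
  "symmetric_quandle (carrier G) (\<lambda>x y. inv (y [^] (n::nat)) \<otimes> x \<otimes> y [^] n) (\<lambda>x. inv x)"
proof -
  let ?conj = "\<lambda>x y. inv (y [^] n) \<otimes> x \<otimes> y [^] n"
  let ?unconj = "\<lambda>x y. y [^] n \<otimes> x \<otimes> inv (y [^] n)"
  have conj_pow: "(?conj y z) [^] n = ?conj (y [^] n) z" if "y \<in> carrier G" "z \<in> carrier G" for y z
    using that nat_pow_conj[of "z [^] n" y n] by simp
  have "quandle (carrier G) ?conj \<and> (\<forall>x\<in>carrier G. \<forall>y\<in>carrier G. qinv (carrier G) ?conj x y = ?unconj x y)"
  proof (rule quandle_by_right_inverse)
    show "?conj (?conj x y) z = ?conj (?conj x z) (?conj y z)"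
      if "x \<in> carrier G" "y \<in> carrier G" "z \<in> carrier G" for x y z
      using that
      by (simp only: conj_pow) (simp add: inv_mult_group m_assoc inv_m_cancel_left m_inv_cancel_left)
    show "?conj x x = x" if "x \<in> carrier G" for x
      using that by (simp add: m_assoc nat_pow_Suc2[symmetric] inv_m_cancel_left)
  qed (simp_all add: m_assoc inv_m_cancel_left m_inv_cancel_left)
  then show ?thesis
    unfolding symmetric_quandle_def good_involution_def
    by (simp add: inv_mult_group m_assoc nat_pow_inv)
qed

lemma symmetric_quandle_Core: "symmetric_quandle (carrier G) (\<lambda>x y. y \<otimes> inv x \<otimes> y) (\<lambda>x. x)"
proof -
  let ?core = "\<lambda>x y. y \<otimes> inv x \<otimes> y"
  have "quandle (carrier G) ?core \<and> (\<forall>x\<in>carrier G. \<forall>y\<in>carrier G. qinv (carrier G) ?core x y = ?core x y)"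
    by (rule quandle_by_right_inverse)
      (simp_all add: inv_mult_group m_assoc inv_m_cancel_left m_inv_cancel_left)
  then show ?thesis
    unfolding symmetric_quandle_def good_involution_def by simp
qed

lemma sq_op_closed: "x \<in> carrier G \<Longrightarrow> y \<in> carrier G \<Longrightarrow> sq_op k G x y \<in> carrier G"
  by (cases k) (simp_all add: sq_op_def)

lemma sq_rho_closed: "x \<in> carrier G \<Longrightarrow> sq_rho k G x \<in> carrier G"
  by (cases k) (simp_all add: sq_rho_def)

lemma symmetric_quandle_sq: "symmetric_quandle (carrier G) (sq_op k G) (sq_rho k G)"
  using symmetric_quandle_Conj symmetric_quandle_Core
  by (cases k) (simp_all add: sq_op_def[abs_def] sq_rho_def[abs_def])

end

lemma (in group_hom) hom_sq_op:
  "a \<in> carrier G \<Longrightarrow> b \<in> carrier G \<Longrightarrow> h (sq_op k G a b) = sq_op k H (h a) (h b)"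
  by (cases k) (simp_all add: sq_op_def hom_nat_pow)

lemma (in group_hom) hom_sq_rho: "a \<in> carrier G \<Longrightarrow> h (sq_rho k G a) = sq_rho k H (h a)"
  by (cases k) (simp_all add: sq_rho_def)

lemma group_extension_bij_product:
  assumes ext: "group_extension A E G \<iota> \<pi>"
  obtains f where "bij_betw f (carrier E) (carrier G \<times> carrier A)"
    and "\<And>e. e \<in> carrier E \<Longrightarrow> fst (f e) = \<pi> e"
proof -
  interpret A: group A + E: group E + G: group G
    using ext by (simp_all add: group_extension_def)
  interpret \<pi>: group_hom E G \<pi>
    using ext by (simp add: group_extension_def group_hom_def group_hom_axioms_def)
  interpret \<iota>: group_hom A E \<iota>
    using ext by (simp add: group_extension_def group_hom_def group_hom_axioms_def)
  have \<iota>_inj: "inj_on \<iota> (carrier A)" and \<pi>_surj: "\<pi> ` carrier E = carrier G"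
    and ker: "\<iota> ` carrier A = kernel E G \<pi>"
    using ext by (simp_all add: group_extension_def)
  define \<sigma> where "\<sigma> = inv_into (carrier E) \<pi>"
  have \<sigma>: "\<sigma> x \<in> carrier E" "\<pi> (\<sigma> x) = x" if "x \<in> carrier G" for x
    using that \<pi>_surj by (auto simp: \<sigma>_def inv_into_into f_inv_into_f)
  define h where "h e = the_inv_into (carrier A) \<iota> (inv\<^bsub>E\<^esub> \<sigma> (\<pi> e) \<otimes>\<^bsub>E\<^esub> e)" for e
  have "inv\<^bsub>E\<^esub> \<sigma> (\<pi> e) \<otimes>\<^bsub>E\<^esub> e \<in> \<iota> ` carrier A" if "e \<in> carrier E" for e
    using that \<sigma>[of "\<pi> e"] by (simp add: ker kernel_def)
  then have h: "h e \<in> carrier A" "\<iota> (h e) = inv\<^bsub>E\<^esub> \<sigma> (\<pi> e) \<otimes>\<^bsub>E\<^esub> e"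
    if "e \<in> carrier E" for e
    using that \<iota>_inj by (simp_all add: h_def the_inv_into_into f_the_inv_into_f)
  have h_section: "h (\<sigma> x \<otimes>\<^bsub>E\<^esub> \<iota> a) = a" and \<pi>_section: "\<pi> (\<sigma> x \<otimes>\<^bsub>E\<^esub> \<iota> a) = x"
    if "x \<in> carrier G" "a \<in> carrier A" for x a
  proof -
    have "\<iota> a \<in> kernel E G \<pi>" using that ker by blast
    then show \<pi>_x: "\<pi> (\<sigma> x \<otimes>\<^bsub>E\<^esub> \<iota> a) = x"
      using that \<sigma> by (simp add: kernel_def)
    show "h (\<sigma> x \<otimes>\<^bsub>E\<^esub> \<iota> a) = a"
      using that \<sigma> \<iota>_inj by (simp add: h_def \<pi>_x E.inv_m_cancel_left the_inv_into_f_f)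
  qed
  show ?thesis
  proof
    show "bij_betw (\<lambda>e. (\<pi> e, h e)) (carrier E) (carrier G \<times> carrier A)"
    proof (rule bij_betw_byWitness[where f' = "\<lambda>(x, a). \<sigma> x \<otimes>\<^bsub>E\<^esub> \<iota> a"])
      show "\<forall>e\<in>carrier E. (\<lambda>(x, a). \<sigma> x \<otimes>\<^bsub>E\<^esub> \<iota> a) (\<pi> e, h e) = e"
        using \<sigma> by (simp add: h E.m_inv_cancel_left)
      show "\<forall>p\<in>carrier G \<times> carrier A. (\<lambda>e. (\<pi> e, h e)) ((\<lambda>(x, a). \<sigma> x \<otimes>\<^bsub>E\<^esub> \<iota> a) p) = p"
        by (simp add: h_section \<pi>_section)
      show "(\<lambda>e. (\<pi> e, h e)) ` carrier E \<subseteq> carrier G \<times> carrier A"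
        using h by auto
      show "(\<lambda>(x, a). \<sigma> x \<otimes>\<^bsub>E\<^esub> \<iota> a) ` (carrier G \<times> carrier A) \<subseteq> carrier E"
        using \<sigma> by auto
    qed
  qed simp
qed

theorem corollary5p2:
  fixes A :: "('a, 'm1) monoid_scheme" and E :: "('e, 'm2) monoid_scheme"
    and G :: "('g, 'm3) monoid_scheme"
    and \<iota> :: "'a \<Rightarrow> 'e" and \<pi> :: "'e \<Rightarrow> 'g" and k :: sq_kind
  assumes "group_extension A E G \<iota> \<pi>"
    and "sq_kind_ok k"
  shows "\<exists>(\<alpha> :: 'g \<Rightarrow> 'g \<Rightarrow> 'a \<Rightarrow> 'a \<Rightarrow> 'a) (\<beta> :: 'g \<Rightarrow> 'a \<Rightarrow> 'a).
           dyn_cocycle (carrier G) (sq_op k G) (sq_rho k G) (\<lambda>_. carrier A) \<alpha> \<beta> \<and>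
           (\<exists>f. sym_quandle_iso (carrier E) (sq_op k E) (sq_rho k E)
                  (Sigma (carrier G) (\<lambda>_. carrier A)) (ext_op (sq_op k G) \<alpha>)
                  (ext_rho (sq_rho k G) \<beta>) f)"
proof -
  interpret E: group E + G: group G
    using assms(1) by (simp_all add: group_extension_def)
  interpret \<pi>: group_hom E G \<pi>
    using assms(1) by (simp add: group_extension_def group_hom_def group_hom_axioms_def)
  obtain f where f: "bij_betw f (carrier E) (carrier G \<times> carrier A)"
    and fst_f: "\<And>e. e \<in> carrier E \<Longrightarrow> fst (f e) = \<pi> e"
    using group_extension_bij_product[OF assms(1)] by blast
  have "\<exists>\<alpha> \<beta>. dyn_cocycle (carrier G) (sq_op k G) (sq_rho k G) (\<lambda>_. carrier A) \<alpha> \<beta> \<and>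
      sym_quandle_iso (carrier E) (sq_op k E) (sq_rho k E) (carrier G \<times> carrier A)
        (ext_op (sq_op k G) \<alpha>) (ext_rho (sq_rho k G) \<beta>) f"
    using E.symmetric_quandle_sq G.symmetric_quandle_sq[unfolded symmetric_quandle_def, THEN conjunct1] f
    by (rule ex_dyn_cocycle_ext_iso)
      (simp_all add: fst_f \<pi>.hom_sq_op \<pi>.hom_sq_rho E.sq_op_closed E.sq_rho_closed)
  then show ?thesis by blast
qed

end
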